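(* Let $L\subseteq G_3$ be the subgroup of elements that fix every edge sticker and send every corner cubelet back to its own position, and let $K=\ker\phi\subseteq G_2$. Then $\psi$ restricts to an isomorphism $L\to K$.
   Context: The $3\times3\times3$ Rubik's cube consists of 8 corner cubelets (3 stickers each), 12 edge cubelets (2 stickers each) and 6 face-center cubelets. $G_3$ is the group of permutations of the 48 corner and edge stickers generated by the six moves $u_3,d_3,f_3,b_3,l_3,r_3$ rotating respectively the top, bottom, front, back, left, right layer of nine cubelets by $90^\circ$ clockwise as seen from outside facing that face. $G_2$ is the analogous group for the $2\times2\times2$ cube (8 corner cubelets, 24 stickers) with generators $u_2,\dots,r_2$; $\psi:G_3\to G_2$ is the homomorphism with $u_3\mapsto u_2$, $d_3\mapsto d_2$, etc. (recording the action on corner stickers), and $\phi:G_2\to S_8$ records the permutation of the 8 corner positions. *)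

theory Defs
  imports "HOL-Algebra.Group" "HOL-Algebra.Generated_Groups" "HOL-Combinatorics.Permutations"
begin

text \<open>Coordinates: x = right, y = up, z = front. Cubelet positions are integer
vectors in {-1,0,1}^3; a sticker is a pair (position of its cubelet, outward unit
normal of the face it lies on).\<close>

type_synonym vec = "int \<times> int \<times> int"
type_synonym sticker = "vec \<times> vec"

definition axis_vecs :: "vec \<Rightarrow> vec set" where
  "axis_vecs p = (case p of (x,y,z) \<Rightarrow> {(x,0,0), (0,y,0), (0,0,z)} - {(0,0,0)})"

definition corner_positions :: "vec set" where
  "corner_positions = {(x,y,z). x \<in> {-1,1} \<and> y \<in> {-1,1} \<and> z \<in> {-1,1}}"

definition edge_positions :: "vec set" where
  "edge_positions = {(x,y,z). x \<in> {-1,0,1} \<and> y \<in> {-1,0,1} \<and> z \<in> {-1,0,1} \<and>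
      card ({i. i < (3::nat) \<and> [x,y,z] ! i = 0}) = 1}"

definition corner_stickers :: "sticker set" where
  "corner_stickers = {(p,n). p \<in> corner_positions \<and> n \<in> axis_vecs p}"

definition edge_stickers :: "sticker set" where
  "edge_stickers = {(p,n). p \<in> edge_positions \<and> n \<in> axis_vecs p}"

definition stickers3 :: "sticker set" where
  "stickers3 = corner_stickers \<union> edge_stickers"

text \<open>Rotations by 90 degrees clockwise as seen from outside facing the face.\<close>
definition rot_u :: "vec \<Rightarrow> vec" where "rot_u v = (case v of (x,y,z) \<Rightarrow> (-z,y,x))"
definition rot_d :: "vec \<Rightarrow> vec" where "rot_d v = (case v of (x,y,z) \<Rightarrow> (z,y,-x))"
definition rot_r :: "vec \<Rightarrow> vec" where "rot_r v = (case v of (x,y,z) \<Rightarrow> (x,z,-y))"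
definition rot_l :: "vec \<Rightarrow> vec" where "rot_l v = (case v of (x,y,z) \<Rightarrow> (x,-z,y))"
definition rot_f :: "vec \<Rightarrow> vec" where "rot_f v = (case v of (x,y,z) \<Rightarrow> (y,-x,z))"
definition rot_b :: "vec \<Rightarrow> vec" where "rot_b v = (case v of (x,y,z) \<Rightarrow> (-y,x,z))"

definition layer_move :: "sticker set \<Rightarrow> (vec \<Rightarrow> bool) \<Rightarrow> (vec \<Rightarrow> vec) \<Rightarrow> sticker \<Rightarrow> sticker" where
  "layer_move S inlayer R s = (if s \<in> S \<and> inlayer (fst s) then (R (fst s), R (snd s)) else s)"

definition moves :: "sticker set \<Rightarrow> (sticker \<Rightarrow> sticker) set" where
  "moves S = {layer_move S (\<lambda>(x,y,z). y = 1) rot_u,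
              layer_move S (\<lambda>(x,y,z). y = -1) rot_d,
              layer_move S (\<lambda>(x,y,z). z = 1) rot_f,
              layer_move S (\<lambda>(x,y,z). z = -1) rot_b,
              layer_move S (\<lambda>(x,y,z). x = -1) rot_l,
              layer_move S (\<lambda>(x,y,z). x = 1) rot_r}"

definition perm_group :: "'a set \<Rightarrow> ('a \<Rightarrow> 'a) monoid" where
  "perm_group S = \<lparr>carrier = {p. p permutes S}, monoid.mult = (\<circ>), one = id\<rparr>"

definition G3 :: "(sticker \<Rightarrow> sticker) monoid" where
  "G3 = (perm_group stickers3)\<lparr>carrier := generate (perm_group stickers3) (moves stickers3)\<rparr>"

definition G2 :: "(sticker \<Rightarrow> sticker) monoid" where
  "G2 = (perm_group corner_stickers)\<lparr>carrier := generate (perm_group corner_stickers) (moves corner_stickers)\<rparr>"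

definition psi :: "(sticker \<Rightarrow> sticker) \<Rightarrow> (sticker \<Rightarrow> sticker)" where
  "psi g = (\<lambda>s. if s \<in> corner_stickers then g s else s)"

definition S8 :: "(vec \<Rightarrow> vec) monoid" where
  "S8 = perm_group corner_positions"

definition phi :: "(sticker \<Rightarrow> sticker) \<Rightarrow> (vec \<Rightarrow> vec)" where
  "phi g = (\<lambda>p. if p \<in> corner_positions then fst (g (p, (fst p, 0, 0))) else p)"

definition L_sub :: "(sticker \<Rightarrow> sticker) set" where
  "L_sub = {g \<in> carrier G3. (\<forall>s \<in> edge_stickers. g s = s) \<and>
                           (\<forall>s \<in> corner_stickers. fst (g s) = fst s)}"

definition K_sub :: "(sticker \<Rightarrow> sticker) set" where
  "K_sub = kernel G2 S8 phi"

end

theory Submission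
  imports Defs
begin

(* An element of L fixes all edge stickers and all corner positions, so it is determined by
   its action on the corner stickers, that is, by its image under psi; and phi of that image is
   the identity. So psi embeds L into K, and only surjectivity needs an argument.

   A face turn is a rotation, so it commutes with the cyclic turn of the three stickers of each
   corner cubelet, and it changes the sum of the corner orientations by a multiple of 3. Both
   properties pass to all of G2. An element of K moves no corner, so it merely twists each
   corner in place, by amounts summing to 0 mod 3. Every such twist is a combination of the
   seven twists of a corner P by one third and of the corner DLB = (-1, -1, -1) by two thirds,
   and each of these is performed by an explicit move sequence of G3 that fixes all edges,
   hence lies in L. *)

section \<open>Permutation groups\<close>

lemma perm_group_simps [simp]:
  "carrier (perm_group S) = {p. p permutes S}"
  "x \<otimes>\<^bsub>perm_group S\<^esub> y = x \<circ> y"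
  "\<one>\<^bsub>perm_group S\<^esub> = id"
  by (simp_all add: perm_group_def)

lemma group_perm_group: "group (perm_group S)"
proof (rule groupI)
  fix x assume "x \<in> carrier (perm_group S)"
  then show "\<exists>y\<in>carrier (perm_group S). y \<otimes>\<^bsub>perm_group S\<^esub> x = \<one>\<^bsub>perm_group S\<^esub>"
    by (intro bexI[of _ "Hilbert_Choice.inv x"]) (auto simp: permutes_inv permutes_inv_o)
qed (auto simp: permutes_compose o_assoc)

lemma nat_pow_perm_group: "x [^]\<^bsub>perm_group S\<^esub> (n::nat) = x ^^ n"
  by (induction n) (simp_all add: funpow_swap1)

lemma generate_induct_periodic:
  assumes "group G" "M \<subseteq> carrier G" "0 < (n::nat)" "\<And>m. m \<in> M \<Longrightarrow> m [^]\<^bsub>G\<^esub> n = \<one>\<^bsub>G\<^esub>"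
    and "g \<in> generate G M"
    and one: "P \<one>\<^bsub>G\<^esub>" and incl: "\<And>m. m \<in> M \<Longrightarrow> P m"
    and mult: "\<And>g h. g \<in> generate G M \<Longrightarrow> h \<in> generate G M \<Longrightarrow> P g \<Longrightarrow> P h \<Longrightarrow> P (g \<otimes>\<^bsub>G\<^esub> h)"
  shows "P g"
  using \<open>g \<in> generate G M\<close>
proof induction
  case (inv m)
  interpret group G by fact
  have m: "m \<in> carrier G" "m \<in> generate G M"
    using inv \<open>M \<subseteq> carrier G\<close> by (auto intro: generate.incl)
  have pow: "m [^]\<^bsub>G\<^esub> k \<in> generate G M \<and> P (m [^]\<^bsub>G\<^esub> k)" for k :: nat
    by (induction k) (use m one incl[OF inv] in \<open>auto intro: generate.one generate.eng mult\<close>)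
  have "m [^]\<^bsub>G\<^esub> (n - 1) \<otimes>\<^bsub>G\<^esub> m = m [^]\<^bsub>G\<^esub> n"
    using \<open>0 < n\<close> by (simp flip: nat_pow_Suc)
  then have "inv\<^bsub>G\<^esub> m = m [^]\<^bsub>G\<^esub> (n - 1)"
    using assms(4)[OF inv] m by (intro inv_equality) auto
  then show ?case using pow by simp
qed (use one incl mult in auto)

lemma funpow_apply_swap: "(f ^^ m) ((f ^^ n) x) = (f ^^ n) ((f ^^ m) x)"
proof -
  have "(f ^^ m) ((f ^^ n) x) = (f ^^ (m + n)) x" by (simp add: funpow_add)
  also have "\<dots> = (f ^^ n) ((f ^^ m) x)" by (simp only: add.commute[of m n] funpow_add comp_apply)
  finally show ?thesis .
qed

definition restrict_perm :: "'a set \<Rightarrow> ('a \<Rightarrow> 'a) \<Rightarrow> 'a \<Rightarrow> 'a" where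
  "restrict_perm T g = (\<lambda>s. if s \<in> T then g s else s)"

lemma restrict_perm_apply: "s \<in> S \<Longrightarrow> restrict_perm S f s = f s"
  by (simp add: restrict_perm_def)

lemma restrict_perm_comp:
  "(\<And>s. s \<in> T \<Longrightarrow> h s \<in> T) \<Longrightarrow> restrict_perm T (g \<circ> h) = restrict_perm T g \<circ> restrict_perm T h"
  by (auto simp: restrict_perm_def)

lemma restrict_perm_restrict_perm: "T \<subseteq> S \<Longrightarrow> restrict_perm T (restrict_perm S f) = restrict_perm T f"
  by (intro ext) (auto simp: restrict_perm_def)

lemma restrict_perm_funpow:
  assumes "\<And>s. s \<in> S \<Longrightarrow> f s \<in> S"
  shows "restrict_perm S f ^^ n = restrict_perm S (f ^^ n)"
proof -
  have "(restrict_perm S f ^^ n) s = restrict_perm S (f ^^ n) s \<and> (s \<in> S \<longrightarrow> (f ^^ n) s \<in> S)" for s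
    by (induction n) (auto simp: restrict_perm_def assms)
  then show ?thesis by blast
qed

lemma restrict_perm_permutes:
  assumes closed: "\<And>s. s \<in> S \<Longrightarrow> f s \<in> S" and period: "f ^^ n = id" "0 < n"
  shows "restrict_perm S f permutes S"
  unfolding permutes_def
proof (intro conjI allI impI)
  let ?g = "restrict_perm S f"
  obtain k where k: "n = Suc k"
    using period(2) gr0_implies_Suc by blast
  have "?g ^^ n = restrict_perm S (f ^^ n)"
    by (rule restrict_perm_funpow) (rule closed)
  also have "\<dots> = id"
    using period(1) by (auto simp: restrict_perm_def fun_eq_iff)
  finally have "?g ^^ Suc k = id"
    unfolding k .
  then have "?g \<circ> ?g ^^ k = id" "?g ^^ k \<circ> ?g = id"
    by (simp only: funpow.simps(2), simp only: funpow_Suc_right)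
  then have "?g ((?g ^^ k) x) = x" "(?g ^^ k) (?g x) = x" for x
    by (simp_all add: fun_eq_iff)
  then show "\<exists>!x. ?g x = y" for y
    by (intro ex1I[of _ "(?g ^^ k) y"]) auto
qed (simp add: restrict_perm_def)

lemma restrict_perm_generate:
  assumes M: "M \<subseteq> {p. p permutes S}" "0 < n" "\<And>m. m \<in> M \<Longrightarrow> m ^^ n = id"
    and stable: "\<And>m s. m \<in> M \<Longrightarrow> s \<in> T \<Longrightarrow> m s \<in> T"
    and g: "g \<in> generate (perm_group S) M"
  shows "(\<forall>s\<in>T. g s \<in> T) \<and> restrict_perm T g \<in> generate (perm_group T) (restrict_perm T ` M)"
proof -
  have "M \<subseteq> carrier (perm_group S)" using M(1) by simp
  from group_perm_group this M(2) _ g show ?thesis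
  proof (rule generate_induct_periodic)
    show "(\<forall>s\<in>T. \<one>\<^bsub>perm_group S\<^esub> s \<in> T) \<and>
        restrict_perm T \<one>\<^bsub>perm_group S\<^esub> \<in> generate (perm_group T) (restrict_perm T ` M)"
      using generate.one[of "perm_group T"] by (simp add: restrict_perm_def id_def)
  next
    fix g h
    assume "(\<forall>s\<in>T. g s \<in> T) \<and> restrict_perm T g \<in> generate (perm_group T) (restrict_perm T ` M)"
      and "(\<forall>s\<in>T. h s \<in> T) \<and> restrict_perm T h \<in> generate (perm_group T) (restrict_perm T ` M)"
    then show "(\<forall>s\<in>T. (g \<otimes>\<^bsub>perm_group S\<^esub> h) s \<in> T) \<and>
        restrict_perm T (g \<otimes>\<^bsub>perm_group S\<^esub> h) \<in> generate (perm_group T) (restrict_perm T ` M)"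
      using generate.eng[of "restrict_perm T g" "perm_group T" _ "restrict_perm T h"]
      by (simp add: restrict_perm_comp)
  qed (use M(3) stable in \<open>auto simp: nat_pow_perm_group intro: generate.incl\<close>)
qed

lemma restrict_perm_hom:
  assumes "M \<subseteq> {p. p permutes S}" "0 < n" "\<And>m. m \<in> M \<Longrightarrow> m ^^ n = id"
    and "\<And>m s. m \<in> M \<Longrightarrow> s \<in> T \<Longrightarrow> m s \<in> T"
  shows "restrict_perm T \<in> hom ((perm_group S)\<lparr>carrier := generate (perm_group S) M\<rparr>)
                               ((perm_group T)\<lparr>carrier := generate (perm_group T) (restrict_perm T ` M)\<rparr>)"
  using restrict_perm_generate[of M S n T] assms by (auto simp: hom_def restrict_perm_comp)

section \<open>Face turns\<close>

lemma card_zero_coords: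
  "card {i. i < (3::nat) \<and> [x, y, z] ! i = (0::int)} =
     of_bool (x = 0) + of_bool (y = 0) + of_bool (z = 0)"
proof -
  have "{i. i < (3::nat) \<and> [x, y, z] ! i = (0::int)} =
     (if x = 0 then {0} else {}) \<union> (if y = 0 then {1} else {}) \<union> (if z = 0 then {2} else {})"
  proof (intro Set.set_eqI iffI)
    fix i assume "i \<in> {i. i < (3::nat) \<and> [x, y, z] ! i = (0::int)}"
    then consider "i = 0" "x = 0" | "i = 1" "y = 0" | "i = 2" "z = 0"
      by (auto simp: less_Suc_eq numeral_3_eq_3 numeral_2_eq_2)
    then show "i \<in> (if x = 0 then {0} else {}) \<union> (if y = 0 then {1} else {}) \<union> (if z = 0 then {2} else {})"
      by cases auto
  qed (auto split: if_splits simp: numeral_2_eq_2)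
  then show ?thesis by simp
qed

lemma mem_corner_stickers:
  "((x, y, z), n) \<in> corner_stickers \<longleftrightarrow>
     x \<in> {-1, 1} \<and> y \<in> {-1, 1} \<and> z \<in> {-1, 1} \<and> n \<in> {(x, 0, 0), (0, y, 0), (0, 0, z)}"
  by (auto simp: corner_stickers_def corner_positions_def axis_vecs_def)

lemma mem_stickers3:
  "((x, y, z), n) \<in> stickers3 \<longleftrightarrow>
     x \<in> {-1, 0, 1} \<and> y \<in> {-1, 0, 1} \<and> z \<in> {-1, 0, 1} \<and>
     of_bool (x = 0) + of_bool (y = 0) + of_bool (z = 0) \<le> (1::nat) \<and> n \<in> axis_vecs (x, y, z)"
  by (auto simp: stickers3_def mem_corner_stickers edge_stickers_def edge_positions_def
      card_zero_coords axis_vecs_def)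

lemma edge_stickers_not_corner: "s \<in> edge_stickers \<Longrightarrow> s \<notin> corner_stickers"
  by (auto simp: edge_stickers_def edge_positions_def corner_stickers_def corner_positions_def card_zero_coords)

lemma ball_stickers3:
  "(\<forall>s\<in>stickers3. P s) \<longleftrightarrow>
     (\<forall>x\<in>{-1, 0, 1}. \<forall>y\<in>{-1, 0, 1}. \<forall>z\<in>{-1, 0, 1}.
        of_bool (x = 0) + of_bool (y = 0) + of_bool (z = 0) \<le> (1::nat) \<longrightarrow>
        (\<forall>n\<in>axis_vecs (x, y, z). P ((x, y, z), n)))"
  by (auto simp: mem_stickers3)

(* Face turns of all of vec \<times> vec. Unlike the moves of G3 and G2, which are their
   restrictions to a sticker set, they can be evaluated without membership tests. *)
definition turn_U :: "sticker \<Rightarrow> sticker" where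
  "turn_U = layer_move UNIV (\<lambda>(x, y, z). y = 1) rot_u"
definition turn_D :: "sticker \<Rightarrow> sticker" where
  "turn_D = layer_move UNIV (\<lambda>(x, y, z). y = -1) rot_d"
definition turn_F :: "sticker \<Rightarrow> sticker" where
  "turn_F = layer_move UNIV (\<lambda>(x, y, z). z = 1) rot_f"
definition turn_B :: "sticker \<Rightarrow> sticker" where
  "turn_B = layer_move UNIV (\<lambda>(x, y, z). z = -1) rot_b"
definition turn_L :: "sticker \<Rightarrow> sticker" where
  "turn_L = layer_move UNIV (\<lambda>(x, y, z). x = -1) rot_l"
definition turn_R :: "sticker \<Rightarrow> sticker" where
  "turn_R = layer_move UNIV (\<lambda>(x, y, z). x = 1) rot_r"

lemmas turn_defs = turn_U_def turn_D_def turn_F_def turn_B_def turn_L_def turn_R_def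
lemmas rot_defs = rot_u_def rot_d_def rot_f_def rot_b_def rot_l_def rot_r_def

definition face_turns :: "(sticker \<Rightarrow> sticker) set" where
  "face_turns = {turn_U, turn_D, turn_F, turn_B, turn_L, turn_R}"

lemma layer_move_eq_restrict_perm: "layer_move S P R = restrict_perm S (layer_move UNIV P R)"
  by (auto simp: layer_move_def restrict_perm_def)

lemma moves_eq: "moves S = restrict_perm S ` face_turns"
  by (simp add: moves_def face_turns_def turn_defs layer_move_eq_restrict_perm[of S])

lemma face_turns_funpow_4: "f \<in> face_turns \<Longrightarrow> f ^^ 4 = id"
  by (auto simp: face_turns_def turn_defs layer_move_def rot_defs numeral_eq_Suc)

lemma stickers3_closed:
  "s \<in> stickers3 \<Longrightarrow> turn_U s \<in> stickers3" "s \<in> stickers3 \<Longrightarrow> turn_D s \<in> stickers3"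
  "s \<in> stickers3 \<Longrightarrow> turn_F s \<in> stickers3" "s \<in> stickers3 \<Longrightarrow> turn_B s \<in> stickers3"
  "s \<in> stickers3 \<Longrightarrow> turn_L s \<in> stickers3" "s \<in> stickers3 \<Longrightarrow> turn_R s \<in> stickers3"
  by (rule bspec[where x = s], simp_all only: ball_stickers3,
      simp add: turn_defs layer_move_def mem_stickers3 axis_vecs_def insert_Diff_if rot_defs)+

lemma corner_stickers_closed:
  "s \<in> corner_stickers \<Longrightarrow> turn_U s \<in> corner_stickers" "s \<in> corner_stickers \<Longrightarrow> turn_D s \<in> corner_stickers"
  "s \<in> corner_stickers \<Longrightarrow> turn_F s \<in> corner_stickers" "s \<in> corner_stickers \<Longrightarrow> turn_B s \<in> corner_stickers"
  "s \<in> corner_stickers \<Longrightarrow> turn_L s \<in> corner_stickers" "s \<in> corner_stickers \<Longrightarrow> turn_R s \<in> corner_stickers"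
  by (cases s, auto simp: turn_defs layer_move_def mem_corner_stickers rot_defs)+

lemma moves_permutes:
  assumes "\<forall>f\<in>face_turns. \<forall>s\<in>S. f s \<in> S" and "m \<in> moves S"
  shows "m permutes S" "m ^^ 4 = id"
proof -
  obtain f where f: "f \<in> face_turns" and m: "m = restrict_perm S f"
    using \<open>m \<in> moves S\<close> by (auto simp: moves_eq)
  have closed: "\<And>s. s \<in> S \<Longrightarrow> f s \<in> S"
    using assms(1) f by blast
  show "m permutes S"
    using restrict_perm_permutes[OF closed face_turns_funpow_4[OF f]] m by simp
  have "restrict_perm S f ^^ 4 = restrict_perm S (f ^^ 4)"
    by (rule restrict_perm_funpow) (rule closed)
  then show "m ^^ 4 = id"
    using face_turns_funpow_4[OF f] m by (auto simp: restrict_perm_def)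
qed

lemma face_turns_closed:
  "\<forall>f\<in>face_turns. \<forall>s\<in>stickers3. f s \<in> stickers3"
  "\<forall>f\<in>face_turns. \<forall>s\<in>corner_stickers. f s \<in> corner_stickers"
  by (auto simp: face_turns_def stickers3_closed corner_stickers_closed)

lemma G3_permutes: "g \<in> carrier G3 \<Longrightarrow> g permutes stickers3"
  using group.generate_in_carrier[OF group_perm_group, of "moves stickers3" stickers3 g]
    moves_permutes(1)[OF face_turns_closed(1)] by (auto simp: G3_def)

lemma G2_permutes: "g \<in> carrier G2 \<Longrightarrow> g permutes corner_stickers"
  using group.generate_in_carrier[OF group_perm_group, of "moves corner_stickers" corner_stickers g]
    moves_permutes(1)[OF face_turns_closed(2)] by (auto simp: G2_def)

lemma psi_eq_restrict_perm: "psi = restrict_perm corner_stickers"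
  by (intro ext) (simp add: psi_def restrict_perm_def)

lemma psi_hom: "psi \<in> hom G3 G2"
proof -
  have "restrict_perm corner_stickers \<in> hom G3 ((perm_group corner_stickers)\<lparr>carrier :=
          generate (perm_group corner_stickers) (restrict_perm corner_stickers ` moves stickers3)\<rparr>)"
    unfolding G3_def
  proof (rule restrict_perm_hom)
    show "moves stickers3 \<subseteq> {p. p permutes stickers3}"
      using moves_permutes(1)[OF face_turns_closed(1)] by blast
    show "\<And>m. m \<in> moves stickers3 \<Longrightarrow> m ^^ 4 = id"
      by (rule moves_permutes(2)[OF face_turns_closed(1)])
    show "m s \<in> corner_stickers" if "m \<in> moves stickers3" "s \<in> corner_stickers" for m s
    proof -
      obtain f where "f \<in> face_turns" "m = restrict_perm stickers3 f"
        using \<open>m \<in> moves stickers3\<close> by (auto simp: moves_eq)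
      then show ?thesis
        using face_turns_closed(2) \<open>s \<in> corner_stickers\<close> by (simp add: restrict_perm_def stickers3_def)
    qed
  qed simp
  moreover have "restrict_perm corner_stickers ` moves stickers3 = moves corner_stickers"
    by (simp add: moves_eq image_image restrict_perm_restrict_perm stickers3_def)
  ultimately show ?thesis
    by (simp add: G2_def psi_eq_restrict_perm)
qed

section \<open>Corner orientation\<close>

(* The rotation by 120 degrees about the outward diagonal of a corner, in the same sense at
   every corner; the induced cycle of the axis directions x, y, z is therefore reversed at the
   corners with x * y * z = -1. Face turns, being rotations, commute with it. *)
definition corner_turn :: "sticker \<Rightarrow> sticker" where
  "corner_turn s = (case s of ((x, y, z), n) \<Rightarrow> ((x, y, z),
     if x * y * z = 1
     then (if n = (x, 0, 0) then (0, y, 0) else if n = (0, y, 0) then (0, 0, z) else (x, 0, 0))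
     else (if n = (x, 0, 0) then (0, 0, z) else if n = (0, 0, z) then (0, y, 0) else (x, 0, 0))))"

definition ud_sticker :: "vec \<Rightarrow> sticker" where
  "ud_sticker p = (p, (0, fst (snd p), 0))"

definition orientation :: "sticker \<Rightarrow> nat" where
  "orientation s = (if s = ud_sticker (fst s) then 0
                    else if s = corner_turn (ud_sticker (fst s)) then 1 else 2)"

definition twist :: "(vec \<Rightarrow> nat) \<Rightarrow> sticker \<Rightarrow> sticker" where
  "twist k s = (if s \<in> corner_stickers then (corner_turn ^^ k (fst s)) s else s)"

definition total_twist :: "(sticker \<Rightarrow> sticker) \<Rightarrow> nat" where
  "total_twist g = (\<Sum>p\<in>corner_positions. orientation (g (ud_sticker p)))"

definition commutes_corner_turn :: "(sticker \<Rightarrow> sticker) \<Rightarrow> bool" where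
  "commutes_corner_turn g \<longleftrightarrow>
     (\<forall>s\<in>corner_stickers. g s \<in> corner_stickers \<and> g (corner_turn s) = corner_turn (g s))"

lemma corner_positions_eq:
  "corner_positions = {(-1, -1, -1), (-1, -1, 1), (-1, 1, -1), (-1, 1, 1),
                       (1, -1, -1), (1, -1, 1), (1, 1, -1), (1, 1, 1)}"
  by (auto simp: corner_positions_def)

lemma ball_corner_stickers:
  "(\<forall>s\<in>corner_stickers. P s) \<longleftrightarrow>
     (\<forall>x\<in>{-1, 1}. \<forall>y\<in>{-1, 1}. \<forall>z\<in>{-1, 1}. \<forall>n\<in>{(x, 0, 0), (0, y, 0), (0, 0, z)}. P ((x, y, z), n))"
  by (auto simp: mem_corner_stickers)

lemma fst_corner_sticker: "s \<in> corner_stickers \<Longrightarrow> fst s \<in> corner_positions"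
  by (auto simp: corner_stickers_def)

lemma corner_stickers_of_position:
  assumes "p \<in> corner_positions"
  shows "ud_sticker p \<in> corner_stickers" "(p, (fst p, 0, 0)) \<in> corner_stickers"
  using assms by (auto simp: corner_positions_def mem_corner_stickers ud_sticker_def)

lemma corner_turn_in:
  "s \<in> corner_stickers \<Longrightarrow> corner_turn s \<in> corner_stickers \<and> fst (corner_turn s) = fst s"
  by (rule bspec[where x = s]) (simp_all add: ball_corner_stickers mem_corner_stickers corner_turn_def)

lemma corner_turn_funpow_in:
  "s \<in> corner_stickers \<Longrightarrow> (corner_turn ^^ j) s \<in> corner_stickers \<and> fst ((corner_turn ^^ j) s) = fst s"
  by (induction j) (auto dest: corner_turn_in)

lemma corner_turn_funpow_mod:
  assumes "s \<in> corner_stickers"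
  shows "(corner_turn ^^ (j mod 3)) s = (corner_turn ^^ j) s"
proof (rule funpow_mod_eq)
  show "(corner_turn ^^ 3) s = s"
    using assms
    by (rule bspec[where x = s, rotated]) (simp add: ball_corner_stickers corner_turn_def numeral_eq_Suc)
qed

lemma orientation_less_3: "orientation s < 3"
  by (simp add: orientation_def)

lemma orientation_ud_sticker: "orientation (ud_sticker p) = 0"
  by (simp add: orientation_def ud_sticker_def)

lemma orientation_corner_turn:
  "s \<in> corner_stickers \<Longrightarrow> orientation (corner_turn s) = Suc (orientation s) mod 3"
  by (rule bspec[where x = s]) (simp_all add: ball_corner_stickers corner_turn_def orientation_def ud_sticker_def)

lemma corner_turn_funpow_orientation:
  "s \<in> corner_stickers \<Longrightarrow> (corner_turn ^^ orientation s) (ud_sticker (fst s)) = s"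
  by (rule bspec[where x = s])
    (simp_all add: ball_corner_stickers corner_turn_def orientation_def ud_sticker_def numeral_eq_Suc)

lemma orientation_corner_turn_funpow:
  "s \<in> corner_stickers \<Longrightarrow> orientation ((corner_turn ^^ j) s) = (orientation s + j) mod 3"
proof (induction j)
  case 0
  then show ?case using orientation_less_3[of s] by simp
next
  case (Suc j)
  then show ?case
    using corner_turn_funpow_in[OF Suc.prems, of j] by (simp add: orientation_corner_turn mod_Suc_eq)
qed

lemma same_corner_turn_funpow:
  assumes u: "u \<in> corner_stickers" and v: "v \<in> corner_stickers" and "fst u = fst v"
  shows "\<exists>j. u = (corner_turn ^^ j) v"
proof
  let ?b = "ud_sticker (fst u)"
  have b: "?b \<in> corner_stickers"
    using corner_stickers_of_position fst_corner_sticker[OF u] by blast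
  have "v = (corner_turn ^^ orientation v) ?b"
    using corner_turn_funpow_orientation[OF v] \<open>fst u = fst v\<close> by simp
  then have "(corner_turn ^^ (orientation u + (3 - orientation v))) v
      = (corner_turn ^^ (orientation u + (3 - orientation v) + orientation v)) ?b"
    by (simp add: funpow_add)
  also have "\<dots> = (corner_turn ^^ (orientation u + 3)) ?b"
    using orientation_less_3[of v] by simp
  also have "\<dots> = (corner_turn ^^ orientation u) ?b"
    by (metis mod_add_self2 corner_turn_funpow_mod[OF b])
  also have "\<dots> = u"
    by (rule corner_turn_funpow_orientation[OF u])
  finally show "u = (corner_turn ^^ (orientation u + (3 - orientation v))) v" ..
qed

lemma commutes_corner_turn_funpow:
  assumes "commutes_corner_turn g" "s \<in> corner_stickers"
  shows "g ((corner_turn ^^ j) s) = (corner_turn ^^ j) (g s)"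
  using assms corner_turn_funpow_in[OF assms(2)] by (induction j) (auto simp: commutes_corner_turn_def)

lemma commutes_corner_turn_comp:
  "commutes_corner_turn g \<Longrightarrow> commutes_corner_turn h \<Longrightarrow> commutes_corner_turn (g \<circ> h)"
  by (simp add: commutes_corner_turn_def)

lemma orientation_apply:
  assumes g: "commutes_corner_turn g" and s: "s \<in> corner_stickers"
  shows "orientation (g s) = (orientation (g (ud_sticker (fst s))) + orientation s) mod 3"
proof -
  have b: "ud_sticker (fst s) \<in> corner_stickers"
    using corner_stickers_of_position fst_corner_sticker[OF s] by blast
  have "g s = g ((corner_turn ^^ orientation s) (ud_sticker (fst s)))"
    using corner_turn_funpow_orientation[OF s] by simp
  also have "\<dots> = (corner_turn ^^ orientation s) (g (ud_sticker (fst s)))"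
    by (rule commutes_corner_turn_funpow[OF g b])
  finally show ?thesis
    using orientation_corner_turn_funpow g b by (simp add: commutes_corner_turn_def)
qed

lemma corner_positions_bij:
  assumes g: "commutes_corner_turn g" "g permutes corner_stickers"
  shows "bij_betw (\<lambda>p. fst (g (ud_sticker p))) corner_positions corner_positions"
proof -
  let ?f = "\<lambda>p. fst (g (ud_sticker p))"
  have g_in: "g (ud_sticker p) \<in> corner_stickers" if "p \<in> corner_positions" for p
    using that corner_stickers_of_position g(1) by (auto simp: commutes_corner_turn_def)
  have "inj_on ?f corner_positions"
  proof (rule inj_onI)
    fix p q assume p: "p \<in> corner_positions" and q: "q \<in> corner_positions" and "?f p = ?f q"
    then obtain j where "g (ud_sticker p) = (corner_turn ^^ j) (g (ud_sticker q))"
      using same_corner_turn_funpow g_in by blast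
    also have "\<dots> = g ((corner_turn ^^ j) (ud_sticker q))"
      using commutes_corner_turn_funpow[OF g(1)] corner_stickers_of_position(1)[OF q] by simp
    finally have "ud_sticker p = (corner_turn ^^ j) (ud_sticker q)"
      using permutes_inj[OF g(2)] by (simp add: inj_eq)
    then show "p = q"
      using corner_turn_funpow_in[OF corner_stickers_of_position(1)[OF q], of j]
      by (auto simp: ud_sticker_def dest: arg_cong[where f = fst])
  qed
  moreover have "?f ` corner_positions \<subseteq> corner_positions"
    using g_in fst_corner_sticker by blast
  then have "?f ` corner_positions = corner_positions"
    using \<open>inj_on ?f corner_positions\<close> by (intro endo_inj_surj) (simp_all add: corner_positions_eq)
  ultimately show ?thesis
    by (simp add: bij_betw_def)
qed

lemma total_twist_comp:
  assumes g: "commutes_corner_turn g" and h: "commutes_corner_turn h" "h permutes corner_stickers"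
  shows "total_twist (g \<circ> h) mod 3 = (total_twist g + total_twist h) mod 3"
proof -
  let ?f = "\<lambda>p. fst (h (ud_sticker p))"
  have h_in: "h (ud_sticker p) \<in> corner_stickers" if "p \<in> corner_positions" for p
    using that corner_stickers_of_position h(1) by (auto simp: commutes_corner_turn_def)
  have "total_twist (g \<circ> h) mod 3
      = (\<Sum>p\<in>corner_positions. (orientation (g (ud_sticker (?f p))) + orientation (h (ud_sticker p))) mod 3) mod 3"
    unfolding total_twist_def using orientation_apply[OF g h_in] by (simp cong: sum.cong)
  also have "\<dots> = ((\<Sum>p\<in>corner_positions. orientation (g (ud_sticker (?f p)))) + total_twist h) mod 3"
    by (simp add: mod_sum_eq sum.distrib total_twist_def)
  also have "(\<Sum>p\<in>corner_positions. orientation (g (ud_sticker (?f p)))) = total_twist g"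
    unfolding total_twist_def
    using sum.reindex_bij_betw[OF corner_positions_bij[OF h], of "\<lambda>p. orientation (g (ud_sticker p))"] .
  finally show ?thesis .
qed

lemma face_turn_corner_invariants:
  assumes "f \<in> face_turns"
  shows "commutes_corner_turn (restrict_perm corner_stickers f)"
    and "total_twist (restrict_perm corner_stickers f) mod 3 = 0"
  using assms unfolding face_turns_def commutes_corner_turn_def ball_corner_stickers
    total_twist_def corner_positions_eq
  by (elim insertE emptyE;
      simp add: restrict_perm_def mem_corner_stickers turn_defs layer_move_def rot_defs
        corner_turn_def orientation_def ud_sticker_def)+

lemma G2_corner_invariants:
  assumes "g \<in> carrier G2"
  shows "commutes_corner_turn g \<and> total_twist g mod 3 = 0"
proof -
  have moves: "moves corner_stickers \<subseteq> carrier (perm_group corner_stickers)"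
    using moves_permutes(1)[OF face_turns_closed(2)] by auto
  have "g \<in> generate (perm_group corner_stickers) (moves corner_stickers)"
    using assms by (simp add: G2_def)
  from group_perm_group moves _ _ this show ?thesis
  proof (rule generate_induct_periodic)
    show "m [^]\<^bsub>perm_group corner_stickers\<^esub> (4::nat) = \<one>\<^bsub>perm_group corner_stickers\<^esub>"
      if "m \<in> moves corner_stickers" for m
      using moves_permutes(2)[OF face_turns_closed(2) that] by (simp add: nat_pow_perm_group)
    show "commutes_corner_turn m \<and> total_twist m mod 3 = 0" if "m \<in> moves corner_stickers" for m
      using that face_turn_corner_invariants by (auto simp: moves_eq)
    fix g h
    assume "g \<in> generate (perm_group corner_stickers) (moves corner_stickers)"
      and h: "h \<in> generate (perm_group corner_stickers) (moves corner_stickers)"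
      and "commutes_corner_turn g \<and> total_twist g mod 3 = 0"
      and "commutes_corner_turn h \<and> total_twist h mod 3 = 0"
    moreover have "h permutes corner_stickers"
      using G2_permutes h by (simp add: G2_def)
    ultimately show "commutes_corner_turn (g \<otimes>\<^bsub>perm_group corner_stickers\<^esub> h) \<and>
        total_twist (g \<otimes>\<^bsub>perm_group corner_stickers\<^esub> h) mod 3 = 0"
      using total_twist_comp[of g h] by (simp add: commutes_corner_turn_comp mod_add_eq[symmetric])
  qed (simp_all add: commutes_corner_turn_def total_twist_def orientation_ud_sticker)
qed

lemma twist_add: "twist a \<circ> twist b = twist (\<lambda>p. a p + b p)"
  by (rule ext) (auto simp: twist_def funpow_add corner_turn_funpow_in)

lemma twist_cong_mod:
  assumes "\<And>p. p \<in> corner_positions \<Longrightarrow> a p mod 3 = b p mod 3"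
  shows "twist a = twist b"
  by (rule ext) (metis twist_def assms corner_turn_funpow_mod fst_corner_sticker)

lemma twist_zero: "twist (\<lambda>p. 0) = id"
  by (rule ext) (simp add: twist_def)

lemma eq_twist_if_fixes_corner_positions:
  assumes g: "commutes_corner_turn g" "g permutes corner_stickers"
    and fixed: "\<And>p. p \<in> corner_positions \<Longrightarrow> fst (g (ud_sticker p)) = p"
  shows "g = twist (\<lambda>p. orientation (g (ud_sticker p)))"
proof
  fix s
  show "g s = twist (\<lambda>p. orientation (g (ud_sticker p))) s"
  proof (cases "s \<in> corner_stickers")
    case True
    let ?b = "ud_sticker (fst s)"
    have b: "?b \<in> corner_stickers"
      using corner_stickers_of_position fst_corner_sticker[OF True] by blast
    then have "g ?b \<in> corner_stickers"
      using g(1) by (simp add: commutes_corner_turn_def)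
    then have gb: "g ?b = (corner_turn ^^ orientation (g ?b)) ?b"
      using corner_turn_funpow_orientation fixed[OF fst_corner_sticker[OF True]] by metis
    have "g s = g ((corner_turn ^^ orientation s) ?b)"
      using corner_turn_funpow_orientation[OF True] by simp
    also have "\<dots> = (corner_turn ^^ orientation s) (g ?b)"
      by (rule commutes_corner_turn_funpow[OF g(1) b])
    also have "\<dots> = (corner_turn ^^ orientation (g ?b)) ((corner_turn ^^ orientation s) ?b)"
      by (subst gb) (rule funpow_apply_swap)
    finally show ?thesis
      using True corner_turn_funpow_orientation[OF True] by (simp add: twist_def)
  next
    case False
    then show ?thesis
      using permutes_not_in[OF g(2)] by (simp add: twist_def)
  qed
qed

lemma K_sub_eq_twist:
  assumes "k \<in> K_sub"
  shows "k = twist (\<lambda>p. orientation (k (ud_sticker p)))" and "total_twist k mod 3 = 0"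
proof -
  have "k \<in> carrier G2" and phi: "phi k = id"
    using assms by (simp_all add: K_sub_def kernel_def S8_def)
  then have k: "commutes_corner_turn k" "total_twist k mod 3 = 0" "k permutes corner_stickers"
    using G2_corner_invariants G2_permutes by auto
  have "fst (k (ud_sticker p)) = p" if p: "p \<in> corner_positions" for p
  proof -
    note corner = corner_stickers_of_position[OF p]
    obtain j where "(p, (fst p, 0, 0)) = (corner_turn ^^ j) (ud_sticker p)"
      using same_corner_turn_funpow[OF corner(2,1)] by (auto simp: ud_sticker_def)
    then have "k (p, (fst p, 0, 0)) = (corner_turn ^^ j) (k (ud_sticker p))"
      using commutes_corner_turn_funpow[OF k(1) corner(1)] by simp
    moreover have "fst (k (p, (fst p, 0, 0))) = p"
      using fun_cong[OF phi, of p] p by (simp add: phi_def)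
    moreover have "k (ud_sticker p) \<in> corner_stickers"
      using k(1) corner(1) by (simp add: commutes_corner_turn_def)
    ultimately show ?thesis
      using corner_turn_funpow_in by metis
  qed
  then show "k = twist (\<lambda>p. orientation (k (ud_sticker p)))"
    using eq_twist_if_fixes_corner_positions[OF k(1,3)] by blast
  show "total_twist k mod 3 = 0"
    by (rule k(2))
qed

section \<open>Twisting two corners on the 3x3x3 cube\<close>

abbreviation U3 :: "sticker \<Rightarrow> sticker" where "U3 \<equiv> restrict_perm stickers3 turn_U"
abbreviation D3 :: "sticker \<Rightarrow> sticker" where "D3 \<equiv> restrict_perm stickers3 turn_D"
abbreviation B3 :: "sticker \<Rightarrow> sticker" where "B3 \<equiv> restrict_perm stickers3 turn_B"
abbreviation L3 :: "sticker \<Rightarrow> sticker" where "L3 \<equiv> restrict_perm stickers3 turn_L"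
abbreviation R3 :: "sticker \<Rightarrow> sticker" where "R3 \<equiv> restrict_perm stickers3 turn_R"
abbreviation U3' :: "sticker \<Rightarrow> sticker" where "U3' \<equiv> U3 \<circ> U3 \<circ> U3"
abbreviation D3' :: "sticker \<Rightarrow> sticker" where "D3' \<equiv> D3 \<circ> D3 \<circ> D3"
abbreviation B3' :: "sticker \<Rightarrow> sticker" where "B3' \<equiv> B3 \<circ> B3 \<circ> B3"
abbreviation L3' :: "sticker \<Rightarrow> sticker" where "L3' \<equiv> L3 \<circ> L3 \<circ> L3"
abbreviation R3' :: "sticker \<Rightarrow> sticker" where "R3' \<equiv> R3 \<circ> R3 \<circ> R3"

(* Composition is right to left: DR_comm_sq performs D R D' R' D R D' R'. *)
abbreviation DR_comm_sq :: "sticker \<Rightarrow> sticker" where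
  "DR_comm_sq \<equiv> R3' \<circ> D3' \<circ> R3 \<circ> D3 \<circ> R3' \<circ> D3' \<circ> R3 \<circ> D3"
abbreviation DR_comm_sq' :: "sticker \<Rightarrow> sticker" where
  "DR_comm_sq' \<equiv> D3' \<circ> R3' \<circ> D3 \<circ> R3 \<circ> D3' \<circ> R3' \<circ> D3 \<circ> R3"

definition twist_pair :: "vec \<Rightarrow> vec \<Rightarrow> nat" where
  "twist_pair P q = (if q = P then 1 else if q = (-1, -1, -1) then 2 else 0)"

(* Within the U layer, DR_comm_sq only twists the corner URB = (1, 1, -1). Hence its
   commutator with a power of U twists two corners of the U layer in opposite senses and fixes
   everything else, and the outer moves conjugate this pair of corners to P and DLB. The simp
   depth limit is raised because the first simp call proves that each intermediate sticker
   lies in stickers3 by nested conditional rewriting, one level per quarter turn. *)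
lemma twist_pair_words:
  "\<forall>s\<in>stickers3. (L3' \<circ> B3 \<circ> DR_comm_sq' \<circ> U3' \<circ> DR_comm_sq \<circ> U3 \<circ> B3' \<circ> L3) s
                  = twist (twist_pair (-1, -1, 1)) s"
  "\<forall>s\<in>stickers3. (B3 \<circ> DR_comm_sq \<circ> U3' \<circ> DR_comm_sq' \<circ> U3 \<circ> B3') s
                  = twist (twist_pair (-1, 1, -1)) s"
  "\<forall>s\<in>stickers3. (D3 \<circ> R3 \<circ> DR_comm_sq' \<circ> U3 \<circ> U3 \<circ> DR_comm_sq \<circ> U3' \<circ> U3' \<circ> R3' \<circ> D3') s
                  = twist (twist_pair (-1, 1, 1)) s"
  "\<forall>s\<in>stickers3. (B3 \<circ> B3 \<circ> DR_comm_sq' \<circ> U3' \<circ> DR_comm_sq \<circ> U3 \<circ> B3' \<circ> B3') s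
                  = twist (twist_pair (1, -1, -1)) s"
  "\<forall>s\<in>stickers3. (D3 \<circ> L3 \<circ> R3 \<circ> DR_comm_sq' \<circ> U3 \<circ> U3 \<circ> DR_comm_sq \<circ> U3' \<circ> U3' \<circ> R3' \<circ> L3' \<circ> D3') s
                  = twist (twist_pair (1, -1, 1)) s"
  "\<forall>s\<in>stickers3. (L3' \<circ> DR_comm_sq \<circ> U3' \<circ> DR_comm_sq' \<circ> U3 \<circ> L3) s
                  = twist (twist_pair (1, 1, -1)) s"
  "\<forall>s\<in>stickers3. (U3 \<circ> L3' \<circ> DR_comm_sq \<circ> U3' \<circ> DR_comm_sq' \<circ> U3 \<circ> L3 \<circ> U3') s
                  = twist (twist_pair (1, 1, 1)) s"
  using [[simp_depth_limit = 1000]]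
  by (simp only: comp_apply restrict_perm_apply stickers3_closed cong: ball_cong,
      simp only: ball_stickers3 ball_simps,
      simp add: axis_vecs_def insert_Diff_if,
      simp add: turn_defs layer_move_def rot_defs twist_def mem_corner_stickers twist_pair_def
        corner_turn_def numeral_2_eq_2)+

lemma turns_in_G3: "U3 \<in> carrier G3" "D3 \<in> carrier G3" "B3 \<in> carrier G3" "L3 \<in> carrier G3" "R3 \<in> carrier G3"
  by (auto simp: G3_def moves_eq face_turns_def intro: generate.incl)

lemma comp_in_G3: "g \<in> carrier G3 \<Longrightarrow> h \<in> carrier G3 \<Longrightarrow> g \<circ> h \<in> carrier G3"
  using generate.eng[of g "perm_group stickers3" "moves stickers3" h] by (simp add: G3_def)

lemma id_in_G3: "id \<in> carrier G3"
  using generate.one[of "perm_group stickers3" "moves stickers3"] by (simp add: G3_def)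

lemma twist_in_G3_if_agrees:
  assumes g: "g \<in> carrier G3" and agree: "\<forall>s\<in>stickers3. g s = twist k s"
  shows "twist k \<in> carrier G3"
proof -
  have "g = twist k"
  proof
    fix s
    show "g s = twist k s"
    proof (cases "s \<in> stickers3")
      case False
      then show ?thesis
        using permutes_not_in[OF G3_permutes[OF g]] by (simp add: twist_def stickers3_def)
    qed (use agree in blast)
  qed
  with g show ?thesis by simp
qed

lemma twist_pair_in_G3:
  assumes "P \<in> corner_positions" "P \<noteq> (-1, -1, -1)"
  shows "twist (twist_pair P) \<in> carrier G3"
  using assms unfolding corner_positions_eq
  by (auto intro!: twist_pair_words[THEN twist_in_G3_if_agrees[rotated]] comp_in_G3 turns_in_G3)

lemma twist_add_in_G3:
  "twist a \<in> carrier G3 \<Longrightarrow> twist b \<in> carrier G3 \<Longrightarrow> twist (\<lambda>p. a p + b p) \<in> carrier G3"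
  using comp_in_G3 by (simp add: twist_add[symmetric])

lemma twist_scale_in_G3: "twist a \<in> carrier G3 \<Longrightarrow> twist (\<lambda>p. n * a p) \<in> carrier G3"
proof (induction n)
  case 0
  show ?case using id_in_G3 by (simp add: twist_zero id_def)
next
  case (Suc n)
  then show ?case using twist_add_in_G3[of a "\<lambda>p. n * a p"] by (simp add: algebra_simps)
qed

lemma twist_pair_combination_in_G3:
  assumes "B \<subseteq> corner_positions - {(-1, -1, -1)}"
  shows "twist (\<lambda>q. \<Sum>P\<in>B. c P * twist_pair P q) \<in> carrier G3"
proof -
  have "finite B"
    using assms by (rule finite_subset) (simp add: corner_positions_eq)
  then show ?thesis
    using assms
  proof induction
    case empty
    show ?case using id_in_G3 by (simp add: twist_zero id_def)
  next
    case (insert P B)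
    then have "twist (twist_pair P) \<in> carrier G3"
      by (intro twist_pair_in_G3) auto
    then show ?case
      using twist_add_in_G3[OF twist_scale_in_G3 insert.IH] insert by (simp add: algebra_simps)
  qed
qed

lemma twist_eq_twist_pair_combination:
  assumes "(\<Sum>p\<in>corner_positions. k p) mod 3 = 0"
  shows "twist k = twist (\<lambda>q. \<Sum>P\<in>corner_positions - {(-1, -1, -1)}. k P * twist_pair P q)"
proof (rule twist_cong_mod)
  define A where "A = corner_positions - {(-1, -1, -1)}"
  have "finite A" by (simp add: A_def corner_positions_eq)
  fix q assume "q \<in> corner_positions"
  show "k q mod 3 = (\<Sum>P\<in>A. k P * twist_pair P q) mod 3"
  proof (cases "q = (-1, -1, -1)")
    case True
    have "(\<Sum>P\<in>A. k P * twist_pair P q) = (\<Sum>P\<in>A. 2 * k P)"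
      using True by (intro sum.cong) (auto simp: A_def twist_pair_def)
    then have "(\<Sum>P\<in>A. k P * twist_pair P q) = 2 * (\<Sum>P\<in>A. k P)"
      by (simp add: sum_distrib_left)
    moreover have "(k q + (\<Sum>P\<in>A. k P)) mod 3 = 0"
      using assms True \<open>q \<in> corner_positions\<close> \<open>finite A\<close>
      by (simp add: A_def sum.remove[of corner_positions q])
    moreover have "(a + b) mod 3 = 0 \<Longrightarrow> a mod 3 = (2 * b) mod 3" for a b :: nat
      by presburger
    ultimately show ?thesis by simp
  next
    case False
    then have "(\<Sum>P\<in>A. k P * twist_pair P q) = (\<Sum>P\<in>A. if P = q then k P else 0)"
      by (intro sum.cong) (auto simp: twist_pair_def)
    then show ?thesis
      using False \<open>finite A\<close> \<open>q \<in> corner_positions\<close> by (simp add: A_def)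
  qed
qed

lemma twist_in_G3: "(\<Sum>p\<in>corner_positions. k p) mod 3 = 0 \<Longrightarrow> twist k \<in> carrier G3"
  using twist_pair_combination_in_G3[of _ k] twist_eq_twist_pair_combination by simp

lemma twist_in_L_sub:
  assumes "(\<Sum>p\<in>corner_positions. k p) mod 3 = 0"
  shows "twist k \<in> L_sub"
  using twist_in_G3[OF assms] edge_stickers_not_corner corner_turn_funpow_in
  by (auto simp: L_sub_def twist_def)

lemma psi_L_sub_subset: "psi ` L_sub \<subseteq> K_sub"
proof
  fix g assume "g \<in> psi ` L_sub"
  then obtain l where l: "l \<in> L_sub" and g: "g = psi l" by blast
  have "g \<in> carrier G2"
    using hom_in_carrier[OF psi_hom] l g by (simp add: L_sub_def)
  moreover have "phi g = id"
  proof
    fix p show "phi g p = id p"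
      using l g corner_stickers_of_position(2)[of p] by (auto simp: phi_def psi_def L_sub_def)
  qed
  ultimately show "g \<in> K_sub"
    by (simp add: K_sub_def kernel_def S8_def)
qed

lemma K_sub_subset_psi_L_sub: "K_sub \<subseteq> psi ` L_sub"
proof
  fix k assume "k \<in> K_sub"
  let ?w = "\<lambda>p. orientation (k (ud_sticker p))"
  have "k = twist ?w" "(\<Sum>p\<in>corner_positions. ?w p) mod 3 = 0"
    using K_sub_eq_twist[OF \<open>k \<in> K_sub\<close>] by (simp_all add: total_twist_def)
  moreover have "psi (twist ?w) = twist ?w"
    by (auto simp: psi_def twist_def)
  ultimately show "k \<in> psi ` L_sub"
    using twist_in_L_sub by (metis image_eqI)
qed

lemma inj_on_psi_L_sub: "inj_on psi L_sub"
proof (rule inj_onI)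
  fix x y assume x: "x \<in> L_sub" and y: "y \<in> L_sub" and "psi x = psi y"
  show "x = y"
  proof
    fix s
    consider "s \<in> corner_stickers" | "s \<in> edge_stickers" | "s \<notin> stickers3"
      by (auto simp: stickers3_def)
    then show "x s = y s"
    proof cases
      case 1
      then show ?thesis using fun_cong[OF \<open>psi x = psi y\<close>, of s] by (simp add: psi_def)
    next
      case 2
      then show ?thesis using x y by (simp add: L_sub_def)
    next
      case 3
      have "x \<in> carrier G3" "y \<in> carrier G3"
        using x y by (simp_all add: L_sub_def)
      then show ?thesis
        using 3 permutes_not_in[OF G3_permutes[of x]] permutes_not_in[OF G3_permutes[of y]] by simp
    qed
  qed
qed

theorem proposition3p8:
  shows "psi \<in> iso (G3\<lparr>carrier := L_sub\<rparr>) (G2\<lparr>carrier := K_sub\<rparr>)"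
proof -
  have "psi \<in> hom (G3\<lparr>carrier := L_sub\<rparr>) (G2\<lparr>carrier := K_sub\<rparr>)"
    using psi_hom psi_L_sub_subset by (auto simp: hom_def L_sub_def)
  moreover have "psi ` L_sub = K_sub"
    using psi_L_sub_subset K_sub_subset_psi_L_sub by blast
  ultimately show ?thesis
    using inj_on_psi_L_sub by (simp add: iso_def bij_betw_def)
qed

end
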